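(* Let $(X_1,Y_1),\dots,(X_n,Y_n)$, $n\ge 2$, be i.i.d. copies of $(X,Y)$ with $X\in\mathbb{R}^p$, $Y\in\mathbb{R}$, $E(X)=0$ and $\mathrm{Var}(X)=\mathbf{I}$, and assume all moments appearing below are finite. Let $\beta=E(XY)$, $\tau^2=\|\beta\|^2$, $\alpha=E(Y)$, $\sigma_Y^2=\mathrm{Var}(Y)$, $W_i=X_iY_i$ with coordinates $W_{ij}$, $W=XY$, $\mathbf{A}=E(WW^T)$. Define $\hat\tau^2=\binom{n}{2}^{-1}\sum_{i_1<i_2}W_{i_1}^TW_{i_2}$, $\hat\sigma_Y^2=\frac{1}{n-1}\sum_{i=1}^n(Y_i-\bar Y)^2$ and $\hat\sigma^2=\hat\sigma_Y^2-\hat\tau^2$. Let $\mu_4=E[(Y-\alpha)^4]$ and $\pi=(\pi_1,\dots,\pi_p)^T$ with $\pi_j=E[(Y_1-\alpha)^2W_{1j}]$. Then $$\mathrm{Var}(\hat\sigma^2)=\Big[\frac1n\mu_4-\frac{n-3}{n(n-1)}\sigma_Y^4\Big]+\mathrm{Var}(\hat\tau^2)-\frac4n\big(\pi^T\beta-\tau^2\sigma_Y^2\big)+\frac{4}{n(n-1)}\sum_{j=1}^p\{E[W_{1j}(Y_1-\alpha)]\}^2,$$ where $\mathrm{Var}(\hat\tau^2)=\frac{4(n-2)}{n(n-1)}(\beta^T\mathbf{A}\beta-\|\beta\|^4)+\frac{2}{n(n-1)}(\|\mathbf{A}\|_F^2-\|\beta\|^4)$.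
   Context: $\beta$ and $\alpha$ are the slope and intercept of the best linear predictor of $Y$ given $X$ (under $E(X)=0$); $\hat\sigma^2$ estimates the noise level $\sigma^2=\sigma_Y^2-\tau^2$. $\|\cdot\|_F$ is the Frobenius norm. *)

theory Defs
  imports "HOL-Probability.Probability"
begin

text \<open>Observations are indexed by 0..n-1. W_i = X_i Y_i.\<close>

definition tau_hat_sq :: "nat \<Rightarrow> (nat \<Rightarrow> 'a \<Rightarrow> real^'p::finite) \<Rightarrow> (nat \<Rightarrow> 'a \<Rightarrow> real) \<Rightarrow> 'a \<Rightarrow> real" where
  "tau_hat_sq n X Y \<omega> =
     (\<Sum>i2<n. \<Sum>i1<i2. (Y i1 \<omega> *\<^sub>R X i1 \<omega>) \<bullet> (Y i2 \<omega> *\<^sub>R X i2 \<omega>)) / real (n choose 2)"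

definition sigmaY_hat_sq :: "nat \<Rightarrow> (nat \<Rightarrow> 'a \<Rightarrow> real) \<Rightarrow> 'a \<Rightarrow> real" where
  "sigmaY_hat_sq n Y \<omega> =
     (\<Sum>i<n. (Y i \<omega> - (\<Sum>k<n. Y k \<omega>) / real n)\<^sup>2) / (real n - 1)"

definition frob_norm :: "real^'p::finite^'p \<Rightarrow> real" where
  "frob_norm A = sqrt (\<Sum>j\<in>UNIV. \<Sum>k\<in>UNIV. (A $ j $ k)\<^sup>2)"

definition var :: "'a measure \<Rightarrow> ('a \<Rightarrow> real) \<Rightarrow> real" where
  "var M f = (LINT \<omega>|M. (f \<omega> - (LINT \<omega>'|M. f \<omega>'))\<^sup>2)"

end

theory Submission
  imports Defs
begin

(* Both tau_hat_sq and sigmaY_hat_sq - tau_hat_sq are U-statistics of order two in the observations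
   Z_i = (X_i, Y_i), with kernels w1.w2 and (y1 - y2)^2/2 - w1.w2, where w = y x.  Both kernels have
   finite rank, K(a, b) = sum_r f_r(a) g_r(b), so by independence E[K(Z_i, Z_j) K(Z_k, Z_l)] is a
   polynomial in the moments of a single observation that only depends on how many indices the pairs
   {i, j} and {k, l} share.  Counting the pairs that share two, one or no index gives Hoeffding's
   formula  Var U = (4 (n - 2) (m1 - theta^2) + 2 (m2 - theta^2)) / (n (n - 1)),  where
   theta = E K(Z_1, Z_2), m1 = E[K(Z_1, Z_2) K(Z_1, Z_3)] and m2 = E[K(Z_1, Z_2)^2]; evaluating
   these three moments for both kernels gives the two identities. *)

lemma integrable_mult_of_square_integrable:
  fixes f g :: "'a \<Rightarrow> real"
  assumes "f \<in> borel_measurable M" "g \<in> borel_measurable M"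
    and "integrable M (\<lambda>x. (f x)\<^sup>2)" "integrable M (\<lambda>x. (g x)\<^sup>2)"
  shows "integrable M (\<lambda>x. f x * g x)"
proof (rule Bochner_Integration.integrable_bound)
  show "integrable M (\<lambda>x. (f x)\<^sup>2 + (g x)\<^sup>2)"
    using assms by simp
  have "\<bar>f x\<bar> * \<bar>g x\<bar> \<le> (f x)\<^sup>2 + (g x)\<^sup>2" for x
  proof -
    have "0 \<le> \<bar>f x\<bar> * \<bar>g x\<bar>" by simp
    moreover have "2 * \<bar>f x\<bar> * \<bar>g x\<bar> \<le> (f x)\<^sup>2 + (g x)\<^sup>2"
      using sum_squares_bound[of "\<bar>f x\<bar>" "\<bar>g x\<bar>"] by simp
    ultimately show ?thesis by linarith
  qed
  then show "AE x in M. norm (f x * g x) \<le> norm ((f x)\<^sup>2 + (g x)\<^sup>2)"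
    by (simp add: abs_mult)
qed (use assms in measurable)

section \<open>Samples of independent copies\<close>

locale iid_sample = prob_space M for M :: "'a measure" +
  fixes Z :: "nat \<Rightarrow> 'a \<Rightarrow> 'b::topological_space" and n :: nat
  assumes measurable_sample: "\<And>i. i < n \<Longrightarrow> Z i \<in> borel_measurable M"
    and indep_sample: "indep_vars (\<lambda>_. borel) Z {..<n}"
    and identically_distributed: "\<And>i. i < n \<Longrightarrow> distr M borel (Z i) = distr M borel (Z 0)"
    and sample_nonempty: "0 < n"
begin

definition E :: "('b \<Rightarrow> real) \<Rightarrow> real" where
  "E \<phi> = (LINT \<omega>|M. \<phi> (Z 0 \<omega>))"

lemma E_const: "E (\<lambda>_. c) = c"
  by (simp add: E_def prob_space)

lemma E_cong: "(\<And>z. \<phi> z = \<psi> z) \<Longrightarrow> E \<phi> = E \<psi>"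
  by (metis ext)

lemma E_uminus: "- E \<phi> = E (\<lambda>z. - \<phi> z)"
  by (simp add: E_def)

lemma E_divide: "E \<phi> / c = E (\<lambda>z. \<phi> z / c)"
  by (simp add: E_def)

lemma measurable_Z0: "Z 0 \<in> borel_measurable M"
  using measurable_sample sample_nonempty by blast

lemma integrable_copy_iff:
  fixes \<phi> :: "'b \<Rightarrow> real"
  assumes "i < n" "\<phi> \<in> borel_measurable borel"
  shows "integrable M (\<lambda>\<omega>. \<phi> (Z i \<omega>)) \<longleftrightarrow> integrable M (\<lambda>\<omega>. \<phi> (Z 0 \<omega>))"
  using integrable_distr_eq[OF measurable_sample[OF assms(1)] assms(2)]
    integrable_distr_eq[OF measurable_Z0 assms(2)] identically_distributed[OF assms(1)]
  by simp

lemma integral_copy: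
  fixes \<phi> :: "'b \<Rightarrow> real"
  assumes "i < n" "\<phi> \<in> borel_measurable borel"
  shows "(LINT \<omega>|M. \<phi> (Z i \<omega>)) = E \<phi>"
  using integral_distr[OF measurable_sample[OF assms(1)] assms(2)]
    integral_distr[OF measurable_Z0 assms(2)] identically_distributed[OF assms(1)]
  by (simp add: E_def)

lemma
  fixes \<phi> :: "nat \<Rightarrow> 'b \<Rightarrow> real"
  assumes I: "I \<subseteq> {..<n}"
    and measurable: "\<And>k. k \<in> I \<Longrightarrow> \<phi> k \<in> borel_measurable borel"
    and integrable: "\<And>k. k \<in> I \<Longrightarrow> integrable M (\<lambda>\<omega>. \<phi> k (Z 0 \<omega>))"
  shows integrable_prod_copies: "integrable M (\<lambda>\<omega>. \<Prod>k\<in>I. \<phi> k (Z k \<omega>))"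
    and integral_prod_copies: "(LINT \<omega>|M. (\<Prod>k\<in>I. \<phi> k (Z k \<omega>))) = (\<Prod>k\<in>I. E (\<phi> k))"
proof -
  have finite: "finite I"
    using I finite_subset by blast
  have indep: "indep_vars (\<lambda>_. borel) (\<lambda>k \<omega>. \<phi> k (Z k \<omega>)) I"
    by (rule indep_vars_compose2[OF indep_vars_subset[OF indep_sample I]]) (use measurable in auto)
  have integrable_k: "integrable M (\<lambda>\<omega>. \<phi> k (Z k \<omega>))" if "k \<in> I" for k
    using integrable_copy_iff[of k "\<phi> k"] that I measurable integrable by auto
  show "integrable M (\<lambda>\<omega>. \<Prod>k\<in>I. \<phi> k (Z k \<omega>))"
    by (rule indep_vars_integrable[OF finite indep integrable_k])
  have "(LINT \<omega>|M. (\<Prod>k\<in>I. \<phi> k (Z k \<omega>))) = (\<Prod>k\<in>I. LINT \<omega>|M. \<phi> k (Z k \<omega>))"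
    by (rule indep_vars_lebesgue_integral[OF finite indep integrable_k])
  also have "\<dots> = (\<Prod>k\<in>I. E (\<phi> k))"
    using I measurable by (intro prod.cong refl integral_copy) auto
  finally show "(LINT \<omega>|M. (\<Prod>k\<in>I. \<phi> k (Z k \<omega>))) = (\<Prod>k\<in>I. E (\<phi> k))" .
qed

lemma
  assumes "i \<noteq> j" "i < n" "j < n"
    and "\<phi> \<in> borel_measurable borel" "\<psi> \<in> borel_measurable borel"
    and "integrable M (\<lambda>\<omega>. \<phi> (Z 0 \<omega>))" "integrable M (\<lambda>\<omega>. \<psi> (Z 0 \<omega>))"
  shows integrable_mult_copies: "integrable M (\<lambda>\<omega>. \<phi> (Z i \<omega>) * \<psi> (Z j \<omega>))"
    and integral_mult_copies: "(LINT \<omega>|M. \<phi> (Z i \<omega>) * \<psi> (Z j \<omega>)) = E \<phi> * E \<psi>"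
  using integrable_prod_copies[of "{i, j}" "\<lambda>k. if k = i then \<phi> else \<psi>"]
    integral_prod_copies[of "{i, j}" "\<lambda>k. if k = i then \<phi> else \<psi>"] assms
  by auto

lemma
  assumes "distinct [i, j, k]" "i < n" "j < n" "k < n"
    and "\<phi> \<in> borel_measurable borel" "\<psi> \<in> borel_measurable borel" "\<eta> \<in> borel_measurable borel"
    and "integrable M (\<lambda>\<omega>. \<phi> (Z 0 \<omega>))" "integrable M (\<lambda>\<omega>. \<psi> (Z 0 \<omega>))"
      "integrable M (\<lambda>\<omega>. \<eta> (Z 0 \<omega>))"
  shows integrable_mult_copies3: "integrable M (\<lambda>\<omega>. \<phi> (Z i \<omega>) * \<psi> (Z j \<omega>) * \<eta> (Z k \<omega>))"
    and integral_mult_copies3: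
      "(LINT \<omega>|M. \<phi> (Z i \<omega>) * \<psi> (Z j \<omega>) * \<eta> (Z k \<omega>)) = E \<phi> * E \<psi> * E \<eta>"
  using integrable_prod_copies[of "{i, j, k}" "\<lambda>m. if m = i then \<phi> else if m = j then \<psi> else \<eta>"]
    integral_prod_copies[of "{i, j, k}" "\<lambda>m. if m = i then \<phi> else if m = j then \<psi> else \<eta>"] assms
  by (auto simp: mult.assoc)

lemma
  assumes "distinct [i, j, k, l]" "i < n" "j < n" "k < n" "l < n"
    and "\<phi> \<in> borel_measurable borel" "\<psi> \<in> borel_measurable borel"
      "\<eta> \<in> borel_measurable borel" "\<rho> \<in> borel_measurable borel"
    and "integrable M (\<lambda>\<omega>. \<phi> (Z 0 \<omega>))" "integrable M (\<lambda>\<omega>. \<psi> (Z 0 \<omega>))"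
      "integrable M (\<lambda>\<omega>. \<eta> (Z 0 \<omega>))" "integrable M (\<lambda>\<omega>. \<rho> (Z 0 \<omega>))"
  shows integrable_mult_copies4:
      "integrable M (\<lambda>\<omega>. \<phi> (Z i \<omega>) * \<psi> (Z j \<omega>) * \<eta> (Z k \<omega>) * \<rho> (Z l \<omega>))"
    and integral_mult_copies4:
      "(LINT \<omega>|M. \<phi> (Z i \<omega>) * \<psi> (Z j \<omega>) * \<eta> (Z k \<omega>) * \<rho> (Z l \<omega>)) = E \<phi> * E \<psi> * E \<eta> * E \<rho>"
  using integrable_prod_copies[of "{i, j, k, l}"
      "\<lambda>m. if m = i then \<phi> else if m = j then \<psi> else if m = k then \<eta> else \<rho>"]
    integral_prod_copies[of "{i, j, k, l}"
      "\<lambda>m. if m = i then \<phi> else if m = j then \<psi> else if m = k then \<eta> else \<rho>"] assms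
  by (auto simp: mult.assoc)

end

section \<open>U-statistics with kernels of finite rank\<close>

lemma sum_pair_overlap_row:
  fixes a b c :: real
  assumes "i \<noteq> j" "i < n" "j < n" "k < n"
  shows "(\<Sum>l\<in>{..<n} - {k}. if {k, l} = {i, j} then a else if {k, l} \<inter> {i, j} \<noteq> {} then b else c)
    = (if k \<in> {i, j} then a + (real n - 2) * b else 2 * b + (real n - 3) * c)"
    (is "sum ?w _ = _")
proof -
  define rest where "rest = {..<n} - {i, j}"
  have finite_rest: "finite rest"
    by (simp add: rest_def)
  have card_rest: "real (card rest) = real n - 2"
    using assms by (simp add: rest_def card_Diff_subset of_nat_diff)
  consider (first) "k = i" | (second) "k = j" | (other) "k \<in> rest"
    using assms by (auto simp: rest_def)
  then show ?thesis
  proof cases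
    case first
    have row: "{..<n} - {k} = insert j rest"
      using first assms by (auto simp: rest_def)
    have "sum ?w ({..<n} - {k}) = a + (\<Sum>l\<in>rest. b)"
      unfolding row using first assms finite_rest
      by (subst sum.insert) (auto simp: rest_def doubleton_eq_iff intro!: sum.cong)
    then show ?thesis
      using first card_rest by simp
  next
    case second
    have row: "{..<n} - {k} = insert i rest"
      using second assms by (auto simp: rest_def)
    have "sum ?w ({..<n} - {k}) = a + (\<Sum>l\<in>rest. b)"
      unfolding row using second assms finite_rest
      by (subst sum.insert) (auto simp: rest_def doubleton_eq_iff intro!: sum.cong)
    then show ?thesis
      using second card_rest by simp
  next
    case other
    have row: "{..<n} - {k} = insert i (insert j (rest - {k}))"
      using other assms by (auto simp: rest_def)
    have "sum ?w ({..<n} - {k}) = b + b + (\<Sum>l\<in>rest - {k}. c)"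
      unfolding row using other assms finite_rest
      by (subst sum.insert; auto simp: rest_def doubleton_eq_iff intro!: sum.cong)+
    moreover have "real (card (rest - {k})) = real n - 3"
      using other finite_rest card_rest card_gt_0_iff[of rest] by (auto simp: of_nat_diff)
    ultimately show ?thesis
      using other by (simp add: rest_def)
  qed
qed

lemma sum_pair_overlap_count:
  fixes a b c :: real
  assumes "i \<noteq> j" "i < n" "j < n"
  shows "(\<Sum>k<n. \<Sum>l\<in>{..<n} - {k}.
            if {k, l} = {i, j} then a else if {k, l} \<inter> {i, j} \<noteq> {} then b else c)
         = 2 * a + 4 * (real n - 2) * b + (real n - 2) * (real n - 3) * c"
proof -
  define R where "R k = (\<Sum>l\<in>{..<n} - {k}.
      if {k, l} = {i, j} then a else if {k, l} \<inter> {i, j} \<noteq> {} then b else c)" for k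
  define rest where "rest = {..<n} - {i, j}"
  have all: "{..<n} = insert i (insert j rest)"
    using assms by (auto simp: rest_def)
  have "(\<Sum>k<n. R k) = R i + R j + (\<Sum>k\<in>rest. R k)"
    unfolding all using assms by (simp add: rest_def add.assoc)
  also have "(\<Sum>k\<in>rest. R k) = (\<Sum>k\<in>rest. 2 * b + (real n - 3) * c)"
    using sum_pair_overlap_row[OF assms] by (intro sum.cong) (auto simp: R_def rest_def)
  also have "(\<Sum>k\<in>rest. 2 * b + (real n - 3) * c) = (real n - 2) * (2 * b + (real n - 3) * c)"
    using assms by (simp add: rest_def card_Diff_subset of_nat_diff)
  also have "R i + R j + (real n - 2) * (2 * b + (real n - 3) * c)
      = 2 * a + 4 * (real n - 2) * b + (real n - 2) * (real n - 3) * c"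
    using sum_pair_overlap_row[OF assms] assms by (simp add: R_def algebra_simps)
  finally show ?thesis
    by (simp add: R_def)
qed

locale finite_rank_ustat = iid_sample +
  fixes R :: "'r set" and f g :: "'r \<Rightarrow> 'b \<Rightarrow> real"
  assumes finite_components: "finite R"
    and measurable_f: "\<And>r. r \<in> R \<Longrightarrow> f r \<in> borel_measurable borel"
    and measurable_g: "\<And>r. r \<in> R \<Longrightarrow> g r \<in> borel_measurable borel"
    and square_integrable_f: "\<And>r. r \<in> R \<Longrightarrow> integrable M (\<lambda>\<omega>. (f r (Z 0 \<omega>))\<^sup>2)"
    and square_integrable_g: "\<And>r. r \<in> R \<Longrightarrow> integrable M (\<lambda>\<omega>. (g r (Z 0 \<omega>))\<^sup>2)"
    and kernel_symmetric: "\<And>a b. (\<Sum>r\<in>R. f r a * g r b) = (\<Sum>r\<in>R. f r b * g r a)"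
    and two_le_sample_size: "2 \<le> n"
begin

definition kernel :: "'b \<Rightarrow> 'b \<Rightarrow> real" where
  "kernel a b = (\<Sum>r\<in>R. f r a * g r b)"

definition ustat :: "'a \<Rightarrow> real" where
  "ustat \<omega> = (\<Sum>i<n. \<Sum>j\<in>{..<n} - {i}. kernel (Z i \<omega>) (Z j \<omega>)) / (real n * (real n - 1))"

definition kernel_mean :: real where
  "kernel_mean = (\<Sum>r\<in>R. E (f r) * E (g r))"

definition cross_moment :: real where
  "cross_moment = (\<Sum>r\<in>R. \<Sum>s\<in>R. E (\<lambda>a. f r a * f s a) * E (g r) * E (g s))"

definition second_moment :: real where
  "second_moment = (\<Sum>r\<in>R. \<Sum>s\<in>R. E (\<lambda>a. f r a * f s a) * E (\<lambda>a. g r a * g s a))"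

lemma kernel_commute: "kernel a b = kernel b a"
  unfolding kernel_def by (rule kernel_symmetric)

lemma measurable_kernel_copies:
  "i < n \<Longrightarrow> j < n \<Longrightarrow> (\<lambda>\<omega>. kernel (Z i \<omega>) (Z j \<omega>)) \<in> borel_measurable M"
  unfolding kernel_def
  by (intro borel_measurable_sum borel_measurable_times
      measurable_compose[OF measurable_sample measurable_f]
      measurable_compose[OF measurable_sample measurable_g])

lemma measurable_ff: "r \<in> R \<Longrightarrow> s \<in> R \<Longrightarrow> (\<lambda>a. f r a * f s a) \<in> borel_measurable borel"
  and measurable_gg: "r \<in> R \<Longrightarrow> s \<in> R \<Longrightarrow> (\<lambda>a. g r a * g s a) \<in> borel_measurable borel"
  using measurable_f measurable_g by auto

lemma measurable_f_Z0: "r \<in> R \<Longrightarrow> (\<lambda>\<omega>. f r (Z 0 \<omega>)) \<in> borel_measurable M"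
  and measurable_g_Z0: "r \<in> R \<Longrightarrow> (\<lambda>\<omega>. g r (Z 0 \<omega>)) \<in> borel_measurable M"
  using measurable_compose[OF measurable_Z0 measurable_f]
    measurable_compose[OF measurable_Z0 measurable_g] by auto

lemma integrable_f: "r \<in> R \<Longrightarrow> integrable M (\<lambda>\<omega>. f r (Z 0 \<omega>))"
  and integrable_g: "r \<in> R \<Longrightarrow> integrable M (\<lambda>\<omega>. g r (Z 0 \<omega>))"
  by (rule square_integrable_imp_integrable;
      simp add: measurable_f_Z0 measurable_g_Z0 square_integrable_f square_integrable_g)+

lemma integrable_ff: "r \<in> R \<Longrightarrow> s \<in> R \<Longrightarrow> integrable M (\<lambda>\<omega>. f r (Z 0 \<omega>) * f s (Z 0 \<omega>))"
  and integrable_gg: "r \<in> R \<Longrightarrow> s \<in> R \<Longrightarrow> integrable M (\<lambda>\<omega>. g r (Z 0 \<omega>) * g s (Z 0 \<omega>))"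
  by (rule integrable_mult_of_square_integrable;
      simp add: measurable_f_Z0 measurable_g_Z0 square_integrable_f square_integrable_g)+

lemma
  assumes "i \<noteq> j" "i < n" "j < n"
  shows integrable_kernel: "integrable M (\<lambda>\<omega>. kernel (Z i \<omega>) (Z j \<omega>))"
    and integral_kernel: "(LINT \<omega>|M. kernel (Z i \<omega>) (Z j \<omega>)) = kernel_mean"
  unfolding kernel_def kernel_mean_def
  using integrable_mult_copies[OF assms measurable_f measurable_g integrable_f integrable_g]
    integral_mult_copies[OF assms measurable_f measurable_g integrable_f integrable_g]
  by (auto simp: integral_sum intro!: sum.cong)

lemma
  assumes "i \<noteq> j" "i < n" "j < n"
  shows integrable_kernel_sq: "integrable M (\<lambda>\<omega>. (kernel (Z i \<omega>) (Z j \<omega>))\<^sup>2)"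
    and integral_kernel_sq: "(LINT \<omega>|M. (kernel (Z i \<omega>) (Z j \<omega>))\<^sup>2) = second_moment"
proof -
  have expand: "(kernel a b)\<^sup>2 = (\<Sum>r\<in>R. \<Sum>s\<in>R. (f r a * f s a) * (g r b * g s b))" for a b
    unfolding kernel_def power2_eq_square sum_product by (intro sum.cong refl) (simp add: ac_simps)
  show "integrable M (\<lambda>\<omega>. (kernel (Z i \<omega>) (Z j \<omega>))\<^sup>2)"
    and "(LINT \<omega>|M. (kernel (Z i \<omega>) (Z j \<omega>))\<^sup>2) = second_moment"
    unfolding expand second_moment_def
    using integrable_mult_copies[OF assms measurable_ff measurable_gg integrable_ff integrable_gg]
      integral_mult_copies[OF assms measurable_ff measurable_gg integrable_ff integrable_gg]
    by (auto simp: integral_sum intro!: sum.cong)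
qed

lemma integral_kernel_mult_shared:
  assumes "distinct [i, j, k]" "i < n" "j < n" "k < n"
  shows "(LINT \<omega>|M. kernel (Z i \<omega>) (Z j \<omega>) * kernel (Z i \<omega>) (Z k \<omega>)) = cross_moment"
proof -
  have expand: "kernel a b * kernel a c = (\<Sum>r\<in>R. \<Sum>s\<in>R. (f r a * f s a) * g r b * g s c)" for a b c
    unfolding kernel_def sum_product by (intro sum.cong refl) (simp add: ac_simps)
  show ?thesis
    unfolding expand cross_moment_def
    using integrable_mult_copies3[OF assms measurable_ff measurable_g measurable_g
        integrable_ff integrable_g integrable_g]
      integral_mult_copies3[OF assms measurable_ff measurable_g measurable_g
        integrable_ff integrable_g integrable_g]
    by (auto simp: integral_sum intro!: sum.cong)
qed

lemma integral_kernel_mult_disjoint: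
  assumes "distinct [i, j, k, l]" "i < n" "j < n" "k < n" "l < n"
  shows "(LINT \<omega>|M. kernel (Z i \<omega>) (Z j \<omega>) * kernel (Z k \<omega>) (Z l \<omega>)) = kernel_mean\<^sup>2"
proof -
  have expand: "kernel a b * kernel c d = (\<Sum>r\<in>R. \<Sum>s\<in>R. f r a * g r b * f s c * g s d)" for a b c d
    unfolding kernel_def sum_product by (intro sum.cong refl) (simp add: ac_simps)
  show ?thesis
    unfolding expand kernel_mean_def power2_eq_square sum_product
    using integrable_mult_copies4[OF assms measurable_f measurable_g measurable_f measurable_g
        integrable_f integrable_g integrable_f integrable_g]
      integral_mult_copies4[OF assms measurable_f measurable_g measurable_f measurable_g
        integrable_f integrable_g integrable_f integrable_g]
    by (auto simp: integral_sum ac_simps intro!: sum.cong)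
qed

lemma integral_kernel_mult_one_shared:
  assumes "i \<noteq> j" "k \<noteq> l" "i < n" "j < n" "k < n" "l < n"
    and "{k, l} \<noteq> {i, j}" "{k, l} \<inter> {i, j} \<noteq> {}"
  shows "(LINT \<omega>|M. kernel (Z i \<omega>) (Z j \<omega>) * kernel (Z k \<omega>) (Z l \<omega>)) = cross_moment"
proof -
  have swap_ij: "kernel (Z i \<omega>) (Z j \<omega>) = kernel (Z j \<omega>) (Z i \<omega>)"
    and swap_kl: "kernel (Z k \<omega>) (Z l \<omega>) = kernel (Z l \<omega>) (Z k \<omega>)" for \<omega>
    by (rule kernel_commute)+
  consider "k = i" "l \<noteq> j" | "k = j" "l \<noteq> i" | "l = i" "k \<noteq> j" | "l = j" "k \<noteq> i"
    using assms(7,8) by auto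
  then show ?thesis
  proof cases
    case 1
    then show ?thesis using assms integral_kernel_mult_shared[of i j l] by simp
  next
    case 2
    then show ?thesis using assms integral_kernel_mult_shared[of j i l] unfolding swap_ij by simp
  next
    case 3
    then show ?thesis using assms integral_kernel_mult_shared[of i j k] unfolding swap_kl by simp
  next
    case 4
    then show ?thesis using assms integral_kernel_mult_shared[of j i k] unfolding swap_ij swap_kl by simp
  qed
qed

definition pair_moment :: "nat \<Rightarrow> nat \<Rightarrow> nat \<Rightarrow> nat \<Rightarrow> real" where
  "pair_moment i j k l =
     (if {k, l} = {i, j} then second_moment
      else if {k, l} \<inter> {i, j} \<noteq> {} then cross_moment else kernel_mean\<^sup>2)"

lemma
  assumes "i \<noteq> j" "k \<noteq> l" "i < n" "j < n" "k < n" "l < n"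
  shows integrable_kernel_mult:
      "integrable M (\<lambda>\<omega>. kernel (Z i \<omega>) (Z j \<omega>) * kernel (Z k \<omega>) (Z l \<omega>))"
    and integral_kernel_mult:
      "(LINT \<omega>|M. kernel (Z i \<omega>) (Z j \<omega>) * kernel (Z k \<omega>) (Z l \<omega>)) = pair_moment i j k l"
proof -
  show "integrable M (\<lambda>\<omega>. kernel (Z i \<omega>) (Z j \<omega>) * kernel (Z k \<omega>) (Z l \<omega>))"
    using assms by (intro integrable_mult_of_square_integrable measurable_kernel_copies integrable_kernel_sq)
  consider (same) "{k, l} = {i, j}"
    | (shared) "{k, l} \<noteq> {i, j}" "{k, l} \<inter> {i, j} \<noteq> {}"
    | (disjoint) "{k, l} \<inter> {i, j} = {}"
    by blast
  then show "(LINT \<omega>|M. kernel (Z i \<omega>) (Z j \<omega>) * kernel (Z k \<omega>) (Z l \<omega>)) = pair_moment i j k l"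
  proof cases
    case same
    then have "kernel (Z k \<omega>) (Z l \<omega>) = kernel (Z i \<omega>) (Z j \<omega>)" for \<omega>
      using kernel_commute by (auto simp: doubleton_eq_iff)
    then show ?thesis
      using same integral_kernel_sq[OF assms(1,3,4)] by (simp add: pair_moment_def power2_eq_square)
  next
    case shared
    then show ?thesis
      using assms integral_kernel_mult_one_shared[of i j k l] by (simp add: pair_moment_def)
  next
    case disjoint
    then show ?thesis
      using assms integral_kernel_mult_disjoint[of i j k l] by (auto simp: pair_moment_def)
  qed
qed

definition index_pairs :: "(nat \<times> nat) set" where
  "index_pairs = (SIGMA i:{..<n}. {..<n} - {i})"

lemma card_index_pairs: "real (card index_pairs) = real n * (real n - 1)"
  using two_le_sample_size by (simp add: index_pairs_def of_nat_diff)

lemma index_pairsD: "p \<in> index_pairs \<Longrightarrow> fst p \<noteq> snd p \<and> fst p < n \<and> snd p < n"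
  by (auto simp: index_pairs_def)

lemma ustat_eq_sum_index_pairs:
  "ustat \<omega> = (\<Sum>(i, j)\<in>index_pairs. kernel (Z i \<omega>) (Z j \<omega>)) / (real n * (real n - 1))"
  by (simp add: ustat_def index_pairs_def sum.Sigma)

lemma sum_pair_moment:
  assumes "p \<in> index_pairs"
  shows "(\<Sum>(k, l)\<in>index_pairs. pair_moment (fst p) (snd p) k l)
    = 2 * second_moment + 4 * (real n - 2) * cross_moment + (real n - 2) * (real n - 3) * kernel_mean\<^sup>2"
  using sum_pair_overlap_count[of "fst p" "snd p" n] index_pairsD[OF assms]
  by (simp add: index_pairs_def pair_moment_def sum.Sigma[symmetric])

lemma
  shows integrable_ustat: "integrable M ustat"
    and integral_ustat: "(LINT \<omega>|M. ustat \<omega>) = kernel_mean"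
proof -
  have integrable_pair: "p \<in> index_pairs \<Longrightarrow> integrable M (\<lambda>\<omega>. kernel (Z (fst p) \<omega>) (Z (snd p) \<omega>))" for p
    using index_pairsD integrable_kernel by blast
  show "integrable M ustat"
    unfolding ustat_eq_sum_index_pairs split_beta using integrable_pair by auto
  have "(LINT \<omega>|M. ustat \<omega>) = (\<Sum>p\<in>index_pairs. kernel_mean) / (real n * (real n - 1))"
    unfolding ustat_eq_sum_index_pairs split_beta using integrable_pair index_pairsD integral_kernel
    by (simp add: integral_sum)
  also have "\<dots> = kernel_mean"
    using card_index_pairs two_le_sample_size by simp
  finally show "(LINT \<omega>|M. ustat \<omega>) = kernel_mean" .
qed

lemma
  shows integrable_ustat_sq: "integrable M (\<lambda>\<omega>. (ustat \<omega>)\<^sup>2)"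
    and integral_ustat_sq: "(LINT \<omega>|M. (ustat \<omega>)\<^sup>2) =
      (2 * second_moment + 4 * (real n - 2) * cross_moment + (real n - 2) * (real n - 3) * kernel_mean\<^sup>2)
      / (real n * (real n - 1))"
proof -
  define c where "c = real n * (real n - 1)"
  define T where "T = 2 * second_moment + 4 * (real n - 2) * cross_moment
    + (real n - 2) * (real n - 3) * kernel_mean\<^sup>2"
  define K where "K p \<omega> = kernel (Z (fst p) \<omega>) (Z (snd p) \<omega>)" for p \<omega>
  have c_pos: "0 < c"
    using two_le_sample_size by (simp add: c_def)
  have square: "(ustat \<omega>)\<^sup>2 = (\<Sum>p\<in>index_pairs. \<Sum>q\<in>index_pairs. K p \<omega> * K q \<omega>) / c\<^sup>2" for \<omega>
    unfolding ustat_eq_sum_index_pairs split_beta K_def c_def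
    by (simp add: power_divide power2_eq_square sum_product)
  have integrable_pq: "integrable M (\<lambda>\<omega>. K p \<omega> * K q \<omega>)"
    and integral_pq: "(LINT \<omega>|M. K p \<omega> * K q \<omega>) = pair_moment (fst p) (snd p) (fst q) (snd q)"
    if "p \<in> index_pairs" "q \<in> index_pairs" for p q
    using index_pairsD[OF that(1)] index_pairsD[OF that(2)]
    by (auto simp: K_def intro: integrable_kernel_mult integral_kernel_mult)
  show "integrable M (\<lambda>\<omega>. (ustat \<omega>)\<^sup>2)"
    unfolding square using integrable_pq by auto
  have "(LINT \<omega>|M. (ustat \<omega>)\<^sup>2) = (\<Sum>p\<in>index_pairs. \<Sum>q\<in>index_pairs. pair_moment (fst p) (snd p) (fst q) (snd q)) / c\<^sup>2"
    unfolding square using integrable_pq integral_pq by (simp add: integral_sum)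
  also have "\<dots> = (\<Sum>p\<in>index_pairs. T) / c\<^sup>2"
    using sum_pair_moment by (simp add: T_def split_beta)
  also have "\<dots> = T / c"
    using card_index_pairs c_pos by (simp add: c_def power2_eq_square)
  finally show "(LINT \<omega>|M. (ustat \<omega>)\<^sup>2) = T / c" .
qed

theorem variance_ustat:
  "var M ustat = (4 * (real n - 2) * (cross_moment - kernel_mean\<^sup>2) + 2 * (second_moment - kernel_mean\<^sup>2))
    / (real n * (real n - 1))"
proof -
  have "var M ustat = (LINT \<omega>|M. (ustat \<omega>)\<^sup>2) - kernel_mean\<^sup>2"
    unfolding var_def using variance_eq[OF integrable_ustat integrable_ustat_sq] integral_ustat by simp
  then show ?thesis
    using two_le_sample_size by (simp add: integral_ustat_sq field_simps)
qed

end

section \<open>The estimators of signal and noise\<close>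

lemma sum_off_diagonal_symmetric:
  fixes k :: "nat \<Rightarrow> nat \<Rightarrow> 'a::comm_ring_1"
  assumes "\<And>i j. k i j = k j i"
  shows "(\<Sum>i<n. \<Sum>j\<in>{..<n} - {i}. k i j) = 2 * (\<Sum>j<n. \<Sum>i<j. k i j)"
proof (induction n)
  case (Suc n)
  have "{..<Suc n} - {i} = insert n ({..<n} - {i})" if "i < n" for i
    using that by auto
  then have "(\<Sum>i<Suc n. \<Sum>j\<in>{..<Suc n} - {i}. k i j)
      = (\<Sum>i<n. \<Sum>j\<in>{..<n} - {i}. k i j) + (\<Sum>i<n. k i n) + (\<Sum>j<n. k n j)"
    by (simp add: lessThan_Suc sum.distrib insert_Diff_if)
  also have "(\<Sum>j<n. k n j) = (\<Sum>i<n. k i n)"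
    using assms by simp
  finally show ?case
    using Suc.IH by (simp add: algebra_simps)
qed simp

lemma sum_off_diagonal_half_sq_diff:
  fixes y :: "nat \<Rightarrow> real"
  assumes "0 < n"
  shows "(\<Sum>i<n. \<Sum>j\<in>{..<n} - {i}. (y i - y j)\<^sup>2 / 2) = real n * (\<Sum>i<n. (y i - (\<Sum>k<n. y k) / real n)\<^sup>2)"
proof -
  define s where "s = (\<Sum>k<n. y k)"
  have "(\<Sum>j\<in>{..<n} - {i}. (y i - y j)\<^sup>2 / 2) = (\<Sum>j<n. (y i - y j)\<^sup>2 / 2)" if "i < n" for i
    using that by (simp add: sum_diff1)
  then have "(\<Sum>i<n. \<Sum>j\<in>{..<n} - {i}. (y i - y j)\<^sup>2 / 2) = (\<Sum>i<n. \<Sum>j<n. (y i - y j)\<^sup>2 / 2)"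
    by simp
  also have "\<dots> = real n * (\<Sum>i<n. (y i)\<^sup>2) - s\<^sup>2"
  proof -
    have "(\<Sum>j<n. (y i - y j)\<^sup>2 / 2) = real n * (y i)\<^sup>2 / 2 - y i * s + (\<Sum>j<n. (y j)\<^sup>2) / 2" for i
      by (simp add: s_def power2_diff sum.distrib sum_subtractf sum_divide_distrib[symmetric]
          sum_distrib_left field_simps)
    then show ?thesis
      by (simp add: sum.distrib sum_subtractf sum_divide_distrib[symmetric] sum_distrib_left[symmetric]
          sum_distrib_right[symmetric] power2_eq_square s_def)
  qed
  also have "\<dots> = real n * (\<Sum>i<n. (y i - s / real n)\<^sup>2)"
  proof -
    have "(\<Sum>i<n. (y i - m)\<^sup>2) = (\<Sum>i<n. (y i)\<^sup>2) - 2 * m * s + real n * m\<^sup>2" for m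
      by (simp add: s_def power2_diff sum.distrib sum_subtractf sum_distrib_left[symmetric]
          sum_distrib_right[symmetric] mult.assoc)
    from this[of "s / real n"] show ?thesis
      using assms by (simp add: field_simps power2_eq_square)
  qed
  finally show ?thesis
    by (simp add: s_def)
qed

lemma real_choose_two: "real (n choose 2) = real n * (real n - 1) / 2"
proof (induction n)
  case (Suc n)
  have "Suc n choose 2 = n + (n choose 2)"
    using binomial_Suc_Suc[of n 1] by (simp add: numeral_2_eq_2)
  then show ?case
    using Suc.IH by (simp add: field_simps)
qed simp

lemma (in finite_measure) integrable_shifted_fourth_power:
  fixes Y :: "'a \<Rightarrow> real"
  assumes Y: "Y \<in> borel_measurable M" and Y4: "integrable M (\<lambda>x. Y x ^ 4)"
  shows "integrable M (\<lambda>x. (Y x - c) ^ 4)"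
proof -
  have Y2: "integrable M (\<lambda>x. (Y x)\<^sup>2)"
    by (rule square_integrable_imp_integrable) (use Y Y4 in \<open>auto simp: power_mult[symmetric]\<close>)
  have Y1: "integrable M Y"
    by (rule square_integrable_imp_integrable[OF Y Y2])
  have Y3: "integrable M (\<lambda>x. Y x * (Y x)\<^sup>2)"
    by (rule integrable_mult_of_square_integrable) (use Y Y2 Y4 in \<open>auto simp: power_mult[symmetric]\<close>)
  have "(Y x - c) ^ 4 = Y x ^ 4 - 4 * c * (Y x * (Y x)\<^sup>2) + 6 * c\<^sup>2 * (Y x)\<^sup>2 - 4 * c ^ 3 * Y x + c ^ 4" for x
    by (simp add: power2_eq_square power3_eq_cube power4_eq_xxxx algebra_simps)
  then show ?thesis
    using Y1 Y2 Y3 Y4 by simp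
qed

datatype 'p noise_term = Sq_left | Sq_right | Cross | Coord 'p

lemma UNIV_noise_term: "UNIV = {Sq_left, Sq_right, Cross} \<union> range Coord"
  using noise_term.exhaust by auto

instance noise_term :: (finite) finite
proof
  show "finite (UNIV :: 'a noise_term set)"
    unfolding UNIV_noise_term by simp
qed

lemma sum_UNIV_noise_term:
  fixes F :: "'p::finite noise_term \<Rightarrow> 'b::comm_monoid_add"
  shows "(\<Sum>r\<in>UNIV. F r) = F Sq_left + F Sq_right + F Cross + (\<Sum>j\<in>UNIV. F (Coord j))"
proof -
  have "(\<Sum>r\<in>UNIV. F r) = sum F {Sq_left, Sq_right, Cross} + sum F (range Coord)"
    unfolding UNIV_noise_term by (rule sum.union_disjoint) auto
  moreover have "sum F (range Coord) = (\<Sum>j\<in>UNIV. F (Coord j))"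
    using sum.reindex[of Coord UNIV F] by (simp add: inj_on_def comp_def)
  ultimately show ?thesis
    by (simp add: add.assoc)
qed

locale regression_sample = prob_space M for M :: "'a measure" +
  fixes X :: "nat \<Rightarrow> 'a \<Rightarrow> real^'p::finite" and Y :: "nat \<Rightarrow> 'a \<Rightarrow> real" and n :: nat
  assumes two_le_n: "2 \<le> n"
    and measurable_obs: "\<And>i. i < n \<Longrightarrow> (\<lambda>\<omega>. (X i \<omega>, Y i \<omega>)) \<in> borel_measurable M"
    and indep_obs: "indep_vars (\<lambda>_. borel) (\<lambda>i \<omega>. (X i \<omega>, Y i \<omega>)) {..<n}"
    and ident_obs: "\<And>i. i < n \<Longrightarrow>
       distr M borel (\<lambda>\<omega>. (X i \<omega>, Y i \<omega>)) = distr M borel (\<lambda>\<omega>. (X 0 \<omega>, Y 0 \<omega>))"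
    and integrable_Y4: "integrable M (\<lambda>\<omega>. (Y 0 \<omega>) ^ 4)"
    and integrable_W2: "integrable M (\<lambda>\<omega>. (norm (Y 0 \<omega> *\<^sub>R X 0 \<omega>))\<^sup>2)"

sublocale regression_sample \<subseteq> iid_sample M "\<lambda>i \<omega>. (X i \<omega>, Y i \<omega>)" n
proof
  show "0 < n"
    using two_le_n by simp
qed (fact measurable_obs indep_obs ident_obs)+

context regression_sample
begin

definition \<alpha> :: real where "\<alpha> = E snd"
definition \<sigma>2 :: real where "\<sigma>2 = E (\<lambda>(x, y). (y - \<alpha>)\<^sup>2)"
definition \<mu>3 :: real where "\<mu>3 = E (\<lambda>(x, y). (y - \<alpha>) ^ 3)"
definition \<mu>4 :: real where "\<mu>4 = E (\<lambda>(x, y). (y - \<alpha>) ^ 4)"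
definition \<beta> :: "'p \<Rightarrow> real" where "\<beta> j = E (\<lambda>(x, y). y * x $ j)"
definition A :: "'p \<Rightarrow> 'p \<Rightarrow> real" where "A j k = E (\<lambda>(x, y). (y * x $ j) * (y * x $ k))"
definition \<pi> :: "'p \<Rightarrow> real" where "\<pi> j = E (\<lambda>(x, y). (y - \<alpha>)\<^sup>2 * (y * x $ j))"
definition \<gamma> :: "'p \<Rightarrow> real" where "\<gamma> j = E (\<lambda>(x, y). (y * x $ j) * (y - \<alpha>))"
definition \<tau>2 :: real where "\<tau>2 = (\<Sum>j\<in>UNIV. (\<beta> j)\<^sup>2)"

lemma measurable_X: "X 0 \<in> borel_measurable M"
  and measurable_Y: "Y 0 \<in> borel_measurable M"
  using measurable_compose[OF measurable_Z0, of fst] measurable_compose[OF measurable_Z0, of snd]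
  by (simp_all add: borel_measurable_continuous_onI continuous_intros)

lemma integrable_centered_Y4: "integrable M (\<lambda>\<omega>. (Y 0 \<omega> - \<alpha>) ^ 4)"
  by (rule integrable_shifted_fourth_power[OF measurable_Y integrable_Y4])

lemma integrable_centered_Y2: "integrable M (\<lambda>\<omega>. (Y 0 \<omega> - \<alpha>)\<^sup>2)"
  by (rule square_integrable_imp_integrable)
    (use integrable_centered_Y4 measurable_Y in \<open>auto simp: power_mult[symmetric]\<close>)

lemma E_centered: "E (\<lambda>z. snd z - \<alpha>) = 0" "E (\<lambda>z. \<alpha> - snd z) = 0"
proof -
  have "integrable M (\<lambda>\<omega>. Y 0 \<omega> - \<alpha>)"
    by (rule square_integrable_imp_integrable[OF _ integrable_centered_Y2]) (use measurable_Y in simp)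
  from Bochner_Integration.integrable_add[OF this integrable_const[of \<alpha>]]
  have "integrable M (Y 0)"
    by simp
  then show "E (\<lambda>z. snd z - \<alpha>) = 0" "E (\<lambda>z. \<alpha> - snd z) = 0"
    by (simp_all add: E_def \<alpha>_def prob_space)
qed

lemma integrable_W_sq: "integrable M (\<lambda>\<omega>. (Y 0 \<omega> * X 0 \<omega> $ j)\<^sup>2)"
proof (rule Bochner_Integration.integrable_bound[OF integrable_W2])
  show "(\<lambda>\<omega>. (Y 0 \<omega> * X 0 \<omega> $ j)\<^sup>2) \<in> borel_measurable M"
    using measurable_compose[OF measurable_X borel_measurable_nth] measurable_Y by measurable
  have "\<bar>Y 0 \<omega> * X 0 \<omega> $ j\<bar> \<le> norm (Y 0 \<omega> *\<^sub>R X 0 \<omega>)" for \<omega>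
    using component_le_norm_cart[of "Y 0 \<omega> *\<^sub>R X 0 \<omega>" j] by simp
  then have "\<bar>Y 0 \<omega> * X 0 \<omega> $ j\<bar>\<^sup>2 \<le> (norm (Y 0 \<omega> *\<^sub>R X 0 \<omega>))\<^sup>2" for \<omega>
    by (intro power_mono) auto
  then show "AE \<omega> in M. norm ((Y 0 \<omega> * X 0 \<omega> $ j)\<^sup>2) \<le> norm ((norm (Y 0 \<omega> *\<^sub>R X 0 \<omega>))\<^sup>2)"
    by simp
qed

(* With u = y - alpha the noise kernel (y1 - y2)^2/2 - w1.w2 splits as u1^2/2 + u2^2/2 - u1 u2 - w1.w2;
   centring at the mean turns the moments of its components into central moments of Y. *)
definition noise_f :: "'p noise_term \<Rightarrow> (real^'p) \<times> real \<Rightarrow> real" where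
  "noise_f r z = (case r of
      Sq_left \<Rightarrow> (snd z - \<alpha>)\<^sup>2 / 2 | Sq_right \<Rightarrow> 1 | Cross \<Rightarrow> - (snd z - \<alpha>)
    | Coord j \<Rightarrow> - (snd z * fst z $ j))"

definition noise_g :: "'p noise_term \<Rightarrow> (real^'p) \<times> real \<Rightarrow> real" where
  "noise_g r z = (case r of
      Sq_left \<Rightarrow> 1 | Sq_right \<Rightarrow> (snd z - \<alpha>)\<^sup>2 / 2 | Cross \<Rightarrow> snd z - \<alpha>
    | Coord j \<Rightarrow> snd z * fst z $ j)"

definition signal_f :: "'p \<Rightarrow> (real^'p) \<times> real \<Rightarrow> real" where
  "signal_f j z = snd z * fst z $ j"

lemma signal_kernel_eq: "(\<Sum>j\<in>UNIV. signal_f j a * signal_f j b) = (snd a *\<^sub>R fst a) \<bullet> (snd b *\<^sub>R fst b)"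
  by (simp add: signal_f_def inner_vec_def mult_ac)

lemma noise_kernel_eq:
  "(\<Sum>r\<in>UNIV. noise_f r a * noise_g r b) = (snd a - snd b)\<^sup>2 / 2 - (snd a *\<^sub>R fst a) \<bullet> (snd b *\<^sub>R fst b)"
proof -
  have "(\<Sum>r\<in>UNIV. noise_f r a * noise_g r b)
      = ((snd a - \<alpha>)\<^sup>2 / 2 + (snd b - \<alpha>)\<^sup>2 / 2 - (snd a - \<alpha>) * (snd b - \<alpha>))
        - (\<Sum>j\<in>UNIV. signal_f j a * signal_f j b)"
    by (simp add: sum_UNIV_noise_term noise_f_def noise_g_def signal_f_def sum_negf algebra_simps)
  also have "(snd a - \<alpha>)\<^sup>2 / 2 + (snd b - \<alpha>)\<^sup>2 / 2 - (snd a - \<alpha>) * (snd b - \<alpha>) = (snd a - snd b)\<^sup>2 / 2"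
    by (simp add: power2_eq_square field_simps)
  finally show ?thesis
    by (simp add: signal_kernel_eq)
qed

lemma measurable_noise_f: "noise_f r \<in> borel_measurable borel"
  unfolding noise_f_def[abs_def]
  by (cases r) (simp_all add: borel_measurable_continuous_onI continuous_intros)

lemma measurable_noise_g: "noise_g r \<in> borel_measurable borel"
  unfolding noise_g_def[abs_def]
  by (cases r) (simp_all add: borel_measurable_continuous_onI continuous_intros)

lemma measurable_signal_f: "signal_f j \<in> borel_measurable borel"
  unfolding signal_f_def[abs_def] by (simp add: borel_measurable_continuous_onI continuous_intros)

lemma square_integrable_noise_f: "integrable M (\<lambda>\<omega>. (noise_f r (X 0 \<omega>, Y 0 \<omega>))\<^sup>2)"
proof (cases r)
  case Sq_left
  have "integrable M (\<lambda>\<omega>. (Y 0 \<omega> - \<alpha>) ^ 4 / 4)"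
    using integrable_centered_Y4 by simp
  then show ?thesis
    using Sq_left by (simp add: noise_f_def power_divide flip: power_mult)
qed (use integrable_centered_Y2 integrable_W_sq in \<open>simp_all add: noise_f_def power2_commute\<close>)

lemma square_integrable_noise_g: "integrable M (\<lambda>\<omega>. (noise_g r (X 0 \<omega>, Y 0 \<omega>))\<^sup>2)"
proof (cases r)
  case Sq_right
  have "integrable M (\<lambda>\<omega>. (Y 0 \<omega> - \<alpha>) ^ 4 / 4)"
    using integrable_centered_Y4 by simp
  then show ?thesis
    using Sq_right by (simp add: noise_g_def power_divide flip: power_mult)
qed (use integrable_centered_Y2 integrable_W_sq in \<open>simp_all add: noise_g_def\<close>)

lemma square_integrable_signal_f: "integrable M (\<lambda>\<omega>. (signal_f j (X 0 \<omega>, Y 0 \<omega>))\<^sup>2)"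
  using integrable_W_sq by (simp add: signal_f_def)

end

sublocale regression_sample \<subseteq> noise: finite_rank_ustat M "\<lambda>i \<omega>. (X i \<omega>, Y i \<omega>)" n UNIV noise_f noise_g
proof
  show "(\<Sum>r\<in>UNIV. noise_f r a * noise_g r b) = (\<Sum>r\<in>UNIV. noise_f r b * noise_g r a)" for a b
    unfolding noise_kernel_eq by (simp add: power2_commute inner_commute)
qed (simp_all add: measurable_noise_f measurable_noise_g square_integrable_noise_f
    square_integrable_noise_g two_le_n)

sublocale regression_sample \<subseteq> signal: finite_rank_ustat M "\<lambda>i \<omega>. (X i \<omega>, Y i \<omega>)" n UNIV signal_f signal_f
  by unfold_locales (simp_all add: measurable_signal_f square_integrable_signal_f mult.commute two_le_n)

context regression_sample
begin

lemma E_noise_f [simp]: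
  "E (noise_f Sq_left) = \<sigma>2 / 2" "E (noise_f Sq_right) = 1" "E (noise_f Cross) = 0"
  "E (noise_f (Coord j)) = - \<beta> j"
  and E_noise_g [simp]:
  "E (noise_g Sq_left) = 1" "E (noise_g Sq_right) = \<sigma>2 / 2" "E (noise_g Cross) = 0"
  "E (noise_g (Coord j)) = \<beta> j"
  and E_signal_f [simp]: "E (signal_f j) = \<beta> j"
  using E_centered
  by (simp_all add: noise_f_def[abs_def] noise_g_def[abs_def] signal_f_def[abs_def] \<sigma>2_def \<beta>_def
      E_const E_uminus E_divide case_prod_unfold)

lemma E_noise_ff [simp]:
  "E (\<lambda>z. noise_f Sq_left z * noise_f Sq_left z) = \<mu>4 / 4"
  "E (\<lambda>z. noise_f Sq_left z * noise_f Sq_right z) = \<sigma>2 / 2"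
  "E (\<lambda>z. noise_f Sq_right z * noise_f Sq_left z) = \<sigma>2 / 2"
  "E (\<lambda>z. noise_f Sq_left z * noise_f Cross z) = - \<mu>3 / 2"
  "E (\<lambda>z. noise_f Cross z * noise_f Sq_left z) = - \<mu>3 / 2"
  "E (\<lambda>z. noise_f Sq_left z * noise_f (Coord k) z) = - \<pi> k / 2"
  "E (\<lambda>z. noise_f (Coord k) z * noise_f Sq_left z) = - \<pi> k / 2"
  "E (\<lambda>z. noise_f Sq_right z * noise_f (Coord k) z) = - \<beta> k"
  "E (\<lambda>z. noise_f (Coord k) z * noise_f Sq_right z) = - \<beta> k"
  "E (\<lambda>z. noise_f Cross z * noise_f Cross z) = \<sigma>2"
  "E (\<lambda>z. noise_f Cross z * noise_f (Coord k) z) = \<gamma> k"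
  "E (\<lambda>z. noise_f (Coord k) z * noise_f Cross z) = \<gamma> k"
  "E (\<lambda>z. noise_f (Coord j) z * noise_f (Coord k) z) = A j k"
  unfolding \<sigma>2_def \<mu>3_def \<mu>4_def \<beta>_def \<pi>_def \<gamma>_def A_def E_uminus E_divide
  by (rule E_cong, simp add: noise_f_def case_prod_unfold power2_eq_square power3_eq_cube power4_eq_xxxx algebra_simps)+

lemma E_noise_ff_constant [simp]:
  "E (\<lambda>z. noise_f Sq_right z * noise_f Sq_right z) = 1"
  "E (\<lambda>z. noise_f Sq_right z * noise_f Cross z) = 0"
  "E (\<lambda>z. noise_f Cross z * noise_f Sq_right z) = 0"
  by (simp_all add: noise_f_def E_const E_centered)

lemma E_noise_gg [simp]:
  "E (\<lambda>z. noise_g Sq_left z * noise_g Sq_right z) = \<sigma>2 / 2"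
  "E (\<lambda>z. noise_g Sq_right z * noise_g Sq_left z) = \<sigma>2 / 2"
  "E (\<lambda>z. noise_g Sq_left z * noise_g (Coord k) z) = \<beta> k"
  "E (\<lambda>z. noise_g (Coord k) z * noise_g Sq_left z) = \<beta> k"
  "E (\<lambda>z. noise_g Sq_right z * noise_g Sq_right z) = \<mu>4 / 4"
  "E (\<lambda>z. noise_g Sq_right z * noise_g Cross z) = \<mu>3 / 2"
  "E (\<lambda>z. noise_g Cross z * noise_g Sq_right z) = \<mu>3 / 2"
  "E (\<lambda>z. noise_g Sq_right z * noise_g (Coord k) z) = \<pi> k / 2"
  "E (\<lambda>z. noise_g (Coord k) z * noise_g Sq_right z) = \<pi> k / 2"
  "E (\<lambda>z. noise_g Cross z * noise_g Cross z) = \<sigma>2"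
  "E (\<lambda>z. noise_g Cross z * noise_g (Coord k) z) = \<gamma> k"
  "E (\<lambda>z. noise_g (Coord k) z * noise_g Cross z) = \<gamma> k"
  "E (\<lambda>z. noise_g (Coord j) z * noise_g (Coord k) z) = A j k"
  unfolding \<sigma>2_def \<mu>3_def \<mu>4_def \<beta>_def \<pi>_def \<gamma>_def A_def E_divide
  by (rule E_cong, simp add: noise_g_def case_prod_unfold power2_eq_square power3_eq_cube power4_eq_xxxx algebra_simps)+

lemma E_noise_gg_constant [simp]:
  "E (\<lambda>z. noise_g Sq_left z * noise_g Sq_left z) = 1"
  "E (\<lambda>z. noise_g Sq_left z * noise_g Cross z) = 0"
  "E (\<lambda>z. noise_g Cross z * noise_g Sq_left z) = 0"
  by (simp_all add: noise_g_def E_const E_centered)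

lemma E_signal_ff [simp]: "E (\<lambda>z. signal_f j z * signal_f k z) = A j k"
  unfolding A_def by (rule E_cong) (simp add: signal_f_def case_prod_unfold)

lemma noise_kernel_mean: "noise.kernel_mean = \<sigma>2 - \<tau>2"
  unfolding noise.kernel_mean_def sum_UNIV_noise_term by (simp add: \<tau>2_def power2_eq_square sum_negf)

lemma noise_cross_moment:
  "noise.cross_moment = \<mu>4 / 4 + 3 * \<sigma>2\<^sup>2 / 4 - (\<Sum>j\<in>UNIV. \<pi> j * \<beta> j) - \<tau>2 * \<sigma>2
    + (\<Sum>j\<in>UNIV. \<Sum>k\<in>UNIV. \<beta> j * A j k * \<beta> k)"
  unfolding noise.cross_moment_def sum_UNIV_noise_term
  by (simp add: \<tau>2_def sum.distrib sum_subtractf sum_negf sum_divide_distrib[symmetric] sum_distrib_left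
      sum_distrib_right power2_eq_square algebra_simps)

lemma noise_second_moment:
  "noise.second_moment = \<mu>4 / 2 + 3 * \<sigma>2\<^sup>2 / 2 - 2 * (\<Sum>j\<in>UNIV. \<pi> j * \<beta> j)
    + 2 * (\<Sum>j\<in>UNIV. (\<gamma> j)\<^sup>2) + (\<Sum>j\<in>UNIV. \<Sum>k\<in>UNIV. (A j k)\<^sup>2)"
  unfolding noise.second_moment_def sum_UNIV_noise_term
  by (simp add: sum.distrib sum_subtractf sum_negf sum_divide_distrib[symmetric] sum_distrib_left
      sum_distrib_right power2_eq_square algebra_simps)

lemma signal_kernel_mean: "signal.kernel_mean = \<tau>2"
  and signal_cross_moment: "signal.cross_moment = (\<Sum>j\<in>UNIV. \<Sum>k\<in>UNIV. \<beta> j * A j k * \<beta> k)"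
  and signal_second_moment: "signal.second_moment = (\<Sum>j\<in>UNIV. \<Sum>k\<in>UNIV. (A j k)\<^sup>2)"
  unfolding signal.kernel_mean_def signal.cross_moment_def signal.second_moment_def
  by (simp_all add: \<tau>2_def power2_eq_square mult_ac)

lemma signal_ustat_eq_tau_hat_sq: "signal.ustat = tau_hat_sq n X Y"
proof
  fix \<omega>
  let ?W = "\<lambda>i. Y i \<omega> *\<^sub>R X i \<omega>"
  have "signal.ustat \<omega> = (\<Sum>i<n. \<Sum>j\<in>{..<n} - {i}. ?W i \<bullet> ?W j) / (real n * (real n - 1))"
    by (simp add: signal.ustat_def signal.kernel_def signal_kernel_eq)
  also have "\<dots> = 2 * (\<Sum>j<n. \<Sum>i<j. ?W i \<bullet> ?W j) / (real n * (real n - 1))"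
    by (subst sum_off_diagonal_symmetric) (simp_all add: inner_commute)
  also have "\<dots> = tau_hat_sq n X Y \<omega>"
    by (simp add: tau_hat_sq_def real_choose_two)
  finally show "signal.ustat \<omega> = tau_hat_sq n X Y \<omega>" .
qed

lemma noise_ustat_eq: "noise.ustat = (\<lambda>\<omega>. sigmaY_hat_sq n Y \<omega> - tau_hat_sq n X Y \<omega>)"
proof
  fix \<omega>
  have n_pos: "0 < real n - 1"
    using two_le_n by simp
  have "noise.ustat \<omega> = (\<Sum>i<n. \<Sum>j\<in>{..<n} - {i}. (Y i \<omega> - Y j \<omega>)\<^sup>2 / 2) / (real n * (real n - 1))
      - signal.ustat \<omega>"
    by (simp add: noise.ustat_def noise.kernel_def signal.ustat_def signal.kernel_def noise_kernel_eq
        signal_kernel_eq sum_subtractf diff_divide_distrib)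
  also have "\<dots> = sigmaY_hat_sq n Y \<omega> - tau_hat_sq n X Y \<omega>"
    using two_le_n n_pos
    by (simp add: sum_off_diagonal_half_sq_diff signal_ustat_eq_tau_hat_sq sigmaY_hat_sq_def)
  finally show "noise.ustat \<omega> = sigmaY_hat_sq n Y \<omega> - tau_hat_sq n X Y \<omega>" .
qed

lemma variance_tau_hat_sq:
  "var M (tau_hat_sq n X Y) =
     4 * (real n - 2) / (real n * (real n - 1)) * ((\<Sum>j\<in>UNIV. \<Sum>k\<in>UNIV. \<beta> j * A j k * \<beta> k) - \<tau>2\<^sup>2)
     + 2 / (real n * (real n - 1)) * ((\<Sum>j\<in>UNIV. \<Sum>k\<in>UNIV. (A j k)\<^sup>2) - \<tau>2\<^sup>2)"
  using signal.variance_ustat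
  unfolding signal_ustat_eq_tau_hat_sq signal_kernel_mean signal_cross_moment signal_second_moment
  by (simp add: add_divide_distrib)

lemma variance_noise_estimator:
  "var M (\<lambda>\<omega>. sigmaY_hat_sq n Y \<omega> - tau_hat_sq n X Y \<omega>) =
     (\<mu>4 / real n - (real n - 3) / (real n * (real n - 1)) * \<sigma>2\<^sup>2)
     + var M (tau_hat_sq n X Y)
     - 4 / real n * ((\<Sum>j\<in>UNIV. \<pi> j * \<beta> j) - \<tau>2 * \<sigma>2)
     + 4 / (real n * (real n - 1)) * (\<Sum>j\<in>UNIV. (\<gamma> j)\<^sup>2)"
proof -
  define N where "N = real n"
  define P where "P = (\<Sum>j\<in>UNIV. \<pi> j * \<beta> j)"
  define Q where "Q = (\<Sum>j\<in>UNIV. \<Sum>k\<in>UNIV. \<beta> j * A j k * \<beta> k)"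
  define F where "F = (\<Sum>j\<in>UNIV. \<Sum>k\<in>UNIV. (A j k)\<^sup>2)"
  define G where "G = (\<Sum>j\<in>UNIV. (\<gamma> j)\<^sup>2)"
  have N: "N \<noteq> 0" "N - 1 \<noteq> 0"
    using two_le_n by (auto simp: N_def)
  have "var M (\<lambda>\<omega>. sigmaY_hat_sq n Y \<omega> - tau_hat_sq n X Y \<omega>)
      = (4 * (N - 2) * (\<mu>4 / 4 + 3 * \<sigma>2\<^sup>2 / 4 - P - \<tau>2 * \<sigma>2 + Q - (\<sigma>2 - \<tau>2)\<^sup>2)
         + 2 * (\<mu>4 / 2 + 3 * \<sigma>2\<^sup>2 / 2 - 2 * P + 2 * G + F - (\<sigma>2 - \<tau>2)\<^sup>2)) / (N * (N - 1))"
    using noise.variance_ustat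
    unfolding noise_ustat_eq noise_kernel_mean noise_cross_moment noise_second_moment
      N_def P_def Q_def F_def G_def .
  also have "4 * (N - 2) * (\<mu>4 / 4 + 3 * \<sigma>2\<^sup>2 / 4 - P - \<tau>2 * \<sigma>2 + Q - (\<sigma>2 - \<tau>2)\<^sup>2)
         + 2 * (\<mu>4 / 2 + 3 * \<sigma>2\<^sup>2 / 2 - 2 * P + 2 * G + F - (\<sigma>2 - \<tau>2)\<^sup>2)
      = (N - 1) * \<mu>4 - (N - 3) * \<sigma>2\<^sup>2 + (4 * (N - 2) * (Q - \<tau>2\<^sup>2) + 2 * (F - \<tau>2\<^sup>2))
        - 4 * (N - 1) * (P - \<tau>2 * \<sigma>2) + 4 * G"
    by (simp add: field_simps power2_eq_square)
  also have "((N - 1) * \<mu>4 - (N - 3) * \<sigma>2\<^sup>2 + (4 * (N - 2) * (Q - \<tau>2\<^sup>2) + 2 * (F - \<tau>2\<^sup>2))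
        - 4 * (N - 1) * (P - \<tau>2 * \<sigma>2) + 4 * G) / (N * (N - 1))
      = (\<mu>4 / N - (N - 3) / (N * (N - 1)) * \<sigma>2\<^sup>2)
        + (4 * (N - 2) / (N * (N - 1)) * (Q - \<tau>2\<^sup>2) + 2 / (N * (N - 1)) * (F - \<tau>2\<^sup>2))
        - 4 / N * (P - \<tau>2 * \<sigma>2) + 4 / (N * (N - 1)) * G"
    using N by (simp add: divide_simps) (simp add: algebra_simps)
  finally show ?thesis
    unfolding variance_tau_hat_sq N_def P_def Q_def F_def G_def .
qed

lemma integral_W: "(LINT \<omega>|M. Y 0 \<omega> *\<^sub>R X 0 \<omega>) = (\<chi> j. \<beta> j)"
proof -
  have measurable_W: "(\<lambda>\<omega>. Y 0 \<omega> *\<^sub>R X 0 \<omega>) \<in> borel_measurable M"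
    using measurable_X measurable_Y by measurable
  have "integrable M (\<lambda>\<omega>. norm (Y 0 \<omega> *\<^sub>R X 0 \<omega>))"
    by (rule square_integrable_imp_integrable[OF _ integrable_W2]) (use measurable_W in measurable)
  then have integrable_W: "integrable M (\<lambda>\<omega>. Y 0 \<omega> *\<^sub>R X 0 \<omega>)"
    using integrable_norm_iff[OF measurable_W] by simp
  have "(LINT \<omega>|M. Y 0 \<omega> *\<^sub>R X 0 \<omega>) $ j = \<beta> j" for j
  proof -
    have "(LINT \<omega>|M. Y 0 \<omega> *\<^sub>R X 0 \<omega>) $ j = (LINT \<omega>|M. Y 0 \<omega> *\<^sub>R X 0 \<omega>) \<bullet> axis j 1"
      by (simp add: inner_axis)
    also have "\<dots> = (LINT \<omega>|M. (Y 0 \<omega> *\<^sub>R X 0 \<omega>) \<bullet> axis j 1)"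
      using integrable_W by (rule integral_inner_left[symmetric])
    finally show ?thesis
      by (simp add: \<beta>_def E_def inner_axis)
  qed
  then show ?thesis
    by (simp add: vec_eq_iff)
qed


lemma moment_integrals:
  "(LINT \<omega>|M. Y 0 \<omega>) = \<alpha>"
  "(LINT \<omega>|M. (Y 0 \<omega> - \<alpha>)\<^sup>2) = \<sigma>2"
  "(LINT \<omega>|M. (Y 0 \<omega> - \<alpha>) ^ 4) = \<mu>4"
  "(\<chi> j. LINT \<omega>|M. (Y 0 \<omega> - \<alpha>)\<^sup>2 * (Y 0 \<omega> * X 0 \<omega> $ j)) = (\<chi> j. \<pi> j)"
  "(\<chi> j k. LINT \<omega>|M. (Y 0 \<omega> * X 0 \<omega> $ j) * (Y 0 \<omega> * X 0 \<omega> $ k)) = (\<chi> j k. A j k)"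
  "(LINT \<omega>|M. (Y 0 \<omega> * X 0 \<omega> $ j) * (Y 0 \<omega> - \<alpha>)) = \<gamma> j"
  by (simp_all add: \<alpha>_def \<sigma>2_def \<mu>4_def \<pi>_def A_def \<gamma>_def E_def)

lemma norm_\<beta>: "(norm (\<chi> j. \<beta> j))\<^sup>2 = \<tau>2" "(norm (\<chi> j. \<beta> j)) ^ 4 = \<tau>2\<^sup>2"
proof -
  show sq: "(norm (\<chi> j. \<beta> j))\<^sup>2 = \<tau>2"
    unfolding power2_norm_eq_inner by (simp add: inner_vec_def \<tau>2_def power2_eq_square)
  show "(norm (\<chi> j. \<beta> j)) ^ 4 = \<tau>2\<^sup>2"
    unfolding sq[symmetric] by (simp flip: power_mult)
qed

lemma frob_norm_A: "(frob_norm (\<chi> j k. A j k))\<^sup>2 = (\<Sum>j\<in>UNIV. \<Sum>k\<in>UNIV. (A j k)\<^sup>2)"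
  by (simp add: frob_norm_def sum_nonneg)

lemma inner_\<beta>_A_\<beta>:
  "(\<chi> j. \<beta> j) \<bullet> ((\<chi> j k. A j k) *v (\<chi> j. \<beta> j)) = (\<Sum>j\<in>UNIV. \<Sum>k\<in>UNIV. \<beta> j * A j k * \<beta> k)"
  by (simp add: inner_vec_def matrix_vector_mult_def sum_distrib_left mult.assoc)

lemma inner_\<pi>_\<beta>: "(\<chi> j. \<pi> j) \<bullet> (\<chi> j. \<beta> j) = (\<Sum>j\<in>UNIV. \<pi> j * \<beta> j)"
  by (simp add: inner_vec_def)

end

theorem proposition3:
  fixes M :: "'a measure" and X :: "nat \<Rightarrow> 'a \<Rightarrow> real^'p::finite"
    and Y :: "nat \<Rightarrow> 'a \<Rightarrow> real" and n :: nat
  assumes "prob_space M"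
    and "n \<ge> 2"
    and meas: "\<And>i. i < n \<Longrightarrow> (\<lambda>\<omega>. (X i \<omega>, Y i \<omega>)) \<in> borel_measurable M"
    and indep: "prob_space.indep_vars M (\<lambda>_. borel) (\<lambda>i \<omega>. (X i \<omega>, Y i \<omega>)) {..<n}"
    and ident: "\<And>i. i < n \<Longrightarrow>
       distr M borel (\<lambda>\<omega>. (X i \<omega>, Y i \<omega>)) = distr M borel (\<lambda>\<omega>. (X 0 \<omega>, Y 0 \<omega>))"
    and int_X2: "integrable M (\<lambda>\<omega>. (norm (X 0 \<omega>))\<^sup>2)"
    and int_Y4: "integrable M (\<lambda>\<omega>. (Y 0 \<omega>) ^ 4)"
    and int_W2: "integrable M (\<lambda>\<omega>. (norm (Y 0 \<omega> *\<^sub>R X 0 \<omega>))\<^sup>2)"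
    and mean_X: "(LINT \<omega>|M. X 0 \<omega>) = 0"
    and var_X: "\<And>j k. (LINT \<omega>|M. X 0 \<omega> $ j * X 0 \<omega> $ k) = (if j = k then 1 else 0)"
  shows
    "let \<alpha> = (LINT \<omega>|M. Y 0 \<omega>);
         \<sigma>Y2 = (LINT \<omega>|M. (Y 0 \<omega> - \<alpha>)\<^sup>2);
         \<beta> = (LINT \<omega>|M. Y 0 \<omega> *\<^sub>R X 0 \<omega>);
         \<tau>2 = (norm \<beta>)\<^sup>2;
         A = (\<chi> j k. LINT \<omega>|M. (Y 0 \<omega> * X 0 \<omega> $ j) * (Y 0 \<omega> * X 0 \<omega> $ k));
         \<mu>4 = (LINT \<omega>|M. (Y 0 \<omega> - \<alpha>) ^ 4);
         \<pi> = (\<chi> j. LINT \<omega>|M. (Y 0 \<omega> - \<alpha>)\<^sup>2 * (Y 0 \<omega> * X 0 \<omega> $ j));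
         N = real n
     in var M (\<lambda>\<omega>. sigmaY_hat_sq n Y \<omega> - tau_hat_sq n X Y \<omega>) =
          (\<mu>4 / N - (N - 3) / (N * (N - 1)) * \<sigma>Y2\<^sup>2)
          + var M (tau_hat_sq n X Y)
          - 4 / N * (\<pi> \<bullet> \<beta> - \<tau>2 * \<sigma>Y2)
          + 4 / (N * (N - 1)) *
              (\<Sum>j\<in>UNIV. (LINT \<omega>|M. (Y 0 \<omega> * X 0 \<omega> $ j) * (Y 0 \<omega> - \<alpha>))\<^sup>2)
      \<and> var M (tau_hat_sq n X Y) =
          4 * (N - 2) / (N * (N - 1)) * (\<beta> \<bullet> (A *v \<beta>) - (norm \<beta>) ^ 4)
          + 2 / (N * (N - 1)) * ((frob_norm A)\<^sup>2 - (norm \<beta>) ^ 4)"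
proof -
  interpret regression_sample M X Y n
    by (intro regression_sample.intro regression_sample_axioms.intro) (fact assms)+
  show ?thesis
    using variance_noise_estimator variance_tau_hat_sq
    unfolding Let_def moment_integrals integral_W norm_\<beta> frob_norm_A inner_\<beta>_A_\<beta> inner_\<pi>_\<beta>
    by simp
qed

end
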